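(* Assume the standing setting below. Let $I$ be a set independent in both $M$ and $N$ which is dually safe, let $W:=W(M/I,N/I)$ and let $B\in B(M/I,N/I,W)$. Then $I\cup B$ is a nice feasible set which is dually safe.
   Context: Standing setting: $E$ is countable, $M$ is a finitary matroid on $E$ (all circuits finite), $N$ is a matroid on $E$ that is a direct sum of a finitary and a cofinitary matroid (cofinitary = dual is finitary). $E_0$ is the union of the finitary components of $N$ (components = connected components of the circuit hypergraph) and $E_1:=E\setminus E_0$; for $F\subseteq E$, $F^j:=F\cap E_j$. $\mathring{\mathsf{span}}_M(F):=\mathsf{span}_M(F)\setminus F$. $F$ is dually safe if $F^1\subseteq\mathsf{span}_{N^*}(\mathring{\mathsf{span}}_M(F))$. Matroids are possibly infinite; $M/X:=(M^*\upharpoonright(E\setminus X))^*$, $M.X:=M/(E\setminus X)$; $r(K)=0$ means $\varnothing$ is a base of $K$. $W$ is an $(M,N)$-wave if $M\upharpoonright W$ has a base independent in $N.W$; the union of all waves is a wave, $W(M,N)$. $B(M,N,X)$ is the set of common bases of $M\upharpoonright X$ and $N.X$. $\mathsf{cond}(M,N)$: for every wave $W$, $N.W$ has an $M$-independent base; $\mathsf{cond}^+(M,N)$: $W(M,N)$ consists of $M$-loops and $r(N.W(M,N))=0$. A set $I$ independent in $M$ and $N$ is feasible if $\mathsf{cond}(M/I,N/I)$, nice feasible if moreover $\mathsf{cond}^+(M/I,N/I)$. *)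

theory Defs
  imports Main "HOL-Library.Countable_Set"
begin

text \<open>A (possibly infinite) matroid is represented by its ground set and its
independence predicate. The matroid axioms are those of Bruhn et al.
(I1)-(I3) together with (IM).\<close>

type_synonym 'a matroid = "'a set \<times> ('a set \<Rightarrow> bool)"

definition ground :: "'a matroid \<Rightarrow> 'a set" where
  "ground M = fst M"

definition indep :: "'a matroid \<Rightarrow> 'a set \<Rightarrow> bool" where
  "indep M I = snd M I"

definition maxl :: "('a set \<Rightarrow> bool) \<Rightarrow> 'a set \<Rightarrow> bool" where
  "maxl P J \<longleftrightarrow> P J \<and> (\<forall>K. P K \<and> J \<subseteq> K \<longrightarrow> K = J)"

definition base :: "'a matroid \<Rightarrow> 'a set \<Rightarrow> bool" where
  "base M B \<longleftrightarrow> maxl (indep M) B"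

definition matroid :: "'a matroid \<Rightarrow> bool" where
  "matroid M \<longleftrightarrow>
     (\<forall>I. indep M I \<longrightarrow> I \<subseteq> ground M) \<and>
     indep M {} \<and>
     (\<forall>I J. indep M I \<and> J \<subseteq> I \<longrightarrow> indep M J) \<and>
     (\<forall>I I'. indep M I \<and> \<not> base M I \<and> base M I' \<longrightarrow>
        (\<exists>x \<in> I' - I. indep M (insert x I))) \<and>
     (\<forall>I X. indep M I \<and> I \<subseteq> X \<and> X \<subseteq> ground M \<longrightarrow>
        (\<exists>J. maxl (\<lambda>J. indep M J \<and> I \<subseteq> J \<and> J \<subseteq> X) J))"

definition circuit :: "'a matroid \<Rightarrow> 'a set \<Rightarrow> bool" where
  "circuit M C \<longleftrightarrow> C \<subseteq> ground M \<and> \<not> indep M C \<and> (\<forall>D. D \<subset> C \<longrightarrow> indep M D)"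

definition loop :: "'a matroid \<Rightarrow> 'a \<Rightarrow> bool" where
  "loop M e \<longleftrightarrow> circuit M {e}"

definition finitary :: "'a matroid \<Rightarrow> bool" where
  "finitary M \<longleftrightarrow> (\<forall>C. circuit M C \<longrightarrow> finite C)"

definition dual :: "'a matroid \<Rightarrow> 'a matroid" where
  "dual M = (ground M, \<lambda>I. I \<subseteq> ground M \<and> (\<exists>B. base M B \<and> I \<inter> B = {}))"

definition cofinitary :: "'a matroid \<Rightarrow> bool" where
  "cofinitary M \<longleftrightarrow> finitary (dual M)"

definition restrict :: "'a matroid \<Rightarrow> 'a set \<Rightarrow> 'a matroid" where
  "restrict M X = (ground M \<inter> X, \<lambda>I. indep M I \<and> I \<subseteq> X)"

definition contract :: "'a matroid \<Rightarrow> 'a set \<Rightarrow> 'a matroid" where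
  "contract M X = dual (restrict (dual M) (ground M - X))"

definition contract_to :: "'a matroid \<Rightarrow> 'a set \<Rightarrow> 'a matroid" where
  "contract_to M X = contract M (ground M - X)"

definition span :: "'a matroid \<Rightarrow> 'a set \<Rightarrow> 'a set" where
  "span M F = F \<union> {e \<in> ground M. \<exists>C. circuit M C \<and> e \<in> C \<and> C \<subseteq> insert e F}"

definition rank_zero :: "'a matroid \<Rightarrow> bool" where
  "rank_zero K \<longleftrightarrow> base K {}"

definition comp_rel :: "'a matroid \<Rightarrow> ('a \<times> 'a) set" where
  "comp_rel M = Id_on (ground M) \<union>
     (({(e, f). \<exists>C. circuit M C \<and> e \<in> C \<and> f \<in> C})\<^sup>+)"

definition components :: "'a matroid \<Rightarrow> 'a set set" where
  "components M = ground M // comp_rel M"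

definition E0 :: "'a matroid \<Rightarrow> 'a set" where
  "E0 N = \<Union>{K \<in> components N. finitary (restrict N K)}"

definition E1 :: "'a matroid \<Rightarrow> 'a set" where
  "E1 N = ground N - E0 N"

definition fin_cofin_sum :: "'a matroid \<Rightarrow> bool" where
  "fin_cofin_sum N \<longleftrightarrow> (\<exists>A B. A \<union> B = ground N \<and> A \<inter> B = {} \<and>
     (\<forall>I. I \<subseteq> ground N \<longrightarrow> (indep N I \<longleftrightarrow> indep N (I \<inter> A) \<and> indep N (I \<inter> B))) \<and>
     finitary (restrict N A) \<and> cofinitary (restrict N B))"

definition dually_safe :: "'a matroid \<Rightarrow> 'a matroid \<Rightarrow> 'a set \<Rightarrow> bool" where
  "dually_safe M N F \<longleftrightarrow> F \<inter> E1 N \<subseteq> span (dual N) (span M F - F)"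

definition wave :: "'a matroid \<Rightarrow> 'a matroid \<Rightarrow> 'a set \<Rightarrow> bool" where
  "wave M N W \<longleftrightarrow> W \<subseteq> ground M \<and>
     (\<exists>B. base (restrict M W) B \<and> indep (contract_to N W) B)"

definition waveU :: "'a matroid \<Rightarrow> 'a matroid \<Rightarrow> 'a set" where
  "waveU M N = \<Union>{W. wave M N W}"

definition common_bases :: "'a matroid \<Rightarrow> 'a matroid \<Rightarrow> 'a set \<Rightarrow> 'a set set" where
  "common_bases M N X = {B. base (restrict M X) B \<and> base (contract_to N X) B}"

definition cond :: "'a matroid \<Rightarrow> 'a matroid \<Rightarrow> bool" where
  "cond M N \<longleftrightarrow> (\<forall>W. wave M N W \<longrightarrow> (\<exists>B. base (contract_to N W) B \<and> indep M B))"

definition cond_plus :: "'a matroid \<Rightarrow> 'a matroid \<Rightarrow> bool" where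
  "cond_plus M N \<longleftrightarrow> (\<forall>e \<in> waveU M N. loop M e) \<and> rank_zero (contract_to N (waveU M N))"

definition feasible :: "'a matroid \<Rightarrow> 'a matroid \<Rightarrow> 'a set \<Rightarrow> bool" where
  "feasible M N I \<longleftrightarrow> indep M I \<and> indep N I \<and> cond (contract M I) (contract N I)"

definition nice_feasible :: "'a matroid \<Rightarrow> 'a matroid \<Rightarrow> 'a set \<Rightarrow> bool" where
  "nice_feasible M N I \<longleftrightarrow> feasible M N I \<and> cond_plus (contract M I) (contract N I)"

end

theory Submission
  imports Defs
begin

text \<open>Write \<open>M' = M/I\<close>, \<open>N' = N/I\<close> and \<open>W\<close> for their largest wave. Contracting further by the
  common base \<open>B\<close> kills the waves: a wave \<open>W'\<close> of \<open>(M'/B, N'/B)\<close> would make \<open>W \<union> W'\<close> a wave of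
  \<open>(M', N')\<close>, so \<open>W' \<subseteq> W - B\<close>. On \<open>W - B\<close> every element is an \<open>M'/B\<close>-loop (as \<open>B\<close> spans \<open>W\<close> in
  \<open>M'\<close>) and \<open>N'/B\<close> contracted to any part of \<open>W - B\<close> has rank zero (as \<open>B\<close> is a base of \<open>N'.W\<close>);
  this gives both \<open>cond\<close> and \<open>cond\<^sup>+\<close> for \<open>I \<union> B\<close>. For dual safety, the new elements of \<open>B\<close> are
  handled by fundamental cocircuits of \<open>N\<close>, which only meet \<open>B\<close> and \<open>W - B \<subseteq> span\<^sub>M(I \<union> B)\<close>.\<close>

lemma ground_dual [simp]: "ground (dual M) = ground M"
  by (simp add: dual_def ground_def)

lemma ground_restrict [simp]: "ground (restrict M X) = ground M \<inter> X"
  by (simp add: restrict_def ground_def)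

lemma ground_contract [simp]: "ground (contract M X) = ground M - X"
  by (auto simp: contract_def dual_def restrict_def ground_def)

lemma indep_dual: "indep (dual M) D \<longleftrightarrow> D \<subseteq> ground M \<and> (\<exists>B. base M B \<and> D \<inter> B = {})"
  by (simp add: dual_def indep_def ground_def)

lemma indep_restrict: "indep (restrict M X) J \<longleftrightarrow> indep M J \<and> J \<subseteq> X"
  by (simp add: restrict_def indep_def)

lemma base_iff: "base M B \<longleftrightarrow> indep M B \<and> (\<forall>K. indep M K \<and> B \<subseteq> K \<longrightarrow> K = B)"
  by (simp add: base_def maxl_def)

lemma base_restrict_iff:
  "base (restrict M X) B \<longleftrightarrow> indep M B \<and> B \<subseteq> X \<and> (\<forall>K. indep M K \<and> B \<subseteq> K \<and> K \<subseteq> X \<longrightarrow> K = B)"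
  by (auto simp: base_iff indep_restrict)

lemma indep_contract:
  "indep (contract M X) J \<longleftrightarrow>
     J \<subseteq> ground M - X \<and> (\<exists>D. base (restrict (dual M) (ground M - X)) D \<and> J \<inter> D = {})"
  by (auto simp: contract_def indep_dual)

lemma matroid_eqI: "ground A = ground B \<Longrightarrow> (\<And>J. indep A J = indep B J) \<Longrightarrow> A = B"
  by (cases A, cases B) (auto simp: ground_def indep_def fun_eq_iff)

lemma matroidD:
  assumes "matroid M"
  shows "\<forall>I. indep M I \<longrightarrow> I \<subseteq> ground M"
    and "indep M {}"
    and "\<forall>I J. indep M I \<and> J \<subseteq> I \<longrightarrow> indep M J"
    and "\<forall>I I'. indep M I \<and> \<not> base M I \<and> base M I' \<longrightarrow> (\<exists>x\<in>I' - I. indep M (insert x I))"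
    and "\<forall>I X. indep M I \<and> I \<subseteq> X \<and> X \<subseteq> ground M \<longrightarrow>
           (\<exists>J. maxl (\<lambda>J. indep M J \<and> I \<subseteq> J \<and> J \<subseteq> X) J)"
  using assms unfolding matroid_def by simp_all

lemma indep_subset_ground: "matroid M \<Longrightarrow> indep M I \<Longrightarrow> I \<subseteq> ground M"
  using matroidD(1) by blast

lemma indep_empty: "matroid M \<Longrightarrow> indep M {}"
  by (rule matroidD(2))

lemma indep_subset: "matroid M \<Longrightarrow> indep M I \<Longrightarrow> J \<subseteq> I \<Longrightarrow> indep M J"
  using matroidD(3) by blast

lemma base_augment:
  "matroid M \<Longrightarrow> indep M I \<Longrightarrow> \<not> base M I \<Longrightarrow> base M I' \<Longrightarrow> \<exists>x\<in>I' - I. indep M (insert x I)"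
  using matroidD(4) by blast

lemma base_subset_ground: "matroid M \<Longrightarrow> base M B \<Longrightarrow> B \<subseteq> ground M"
  by (simp add: base_iff indep_subset_ground)

lemma base_restrict_self: "indep M X \<Longrightarrow> base (restrict M X) X"
  by (auto simp: base_restrict_iff)

lemma basis_extend:
  assumes "matroid M" "indep M I" "I \<subseteq> X" "X \<subseteq> ground M"
  shows "\<exists>J. base (restrict M X) J \<and> I \<subseteq> J"
proof -
  from assms obtain J where "maxl (\<lambda>J. indep M J \<and> I \<subseteq> J \<and> J \<subseteq> X) J"
    using matroidD(5) by blast
  then show ?thesis
    unfolding maxl_def base_restrict_iff by (metis subset_trans)
qed

lemma basis_exists: "matroid M \<Longrightarrow> X \<subseteq> ground M \<Longrightarrow> \<exists>J. base (restrict M X) J"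
  using basis_extend[OF _ indep_empty] by blast

lemma base_of_basis_containing_base:
  assumes M: "matroid M" and J: "base (restrict M X) J" and B0: "base M B0" "B0 \<subseteq> X"
  shows "base M J"
proof (rule ccontr)
  have "indep M J" "J \<subseteq> X" and J_max: "\<forall>K. indep M K \<and> J \<subseteq> K \<and> K \<subseteq> X \<longrightarrow> K = J"
    using J by (auto simp: base_restrict_iff)
  moreover assume "\<not> base M J"
  ultimately obtain x where "x \<in> B0 - J" "indep M (insert x J)"
    using base_augment[OF M _ _ B0(1)] by blast
  then show False
    using J_max B0(2) \<open>J \<subseteq> X\<close> by blast
qed

lemma indep_extend_to_base_within:
  assumes "matroid M" "indep M I" "I \<subseteq> X" "X \<subseteq> ground M" "base M B0" "B0 \<subseteq> X"
  shows "\<exists>B. base M B \<and> I \<subseteq> B \<and> B \<subseteq> X"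
  using basis_extend[OF assms(1-4)] base_of_basis_containing_base[OF assms(1) _ assms(5,6)]
  by (auto simp: base_restrict_iff)

lemma base_exists:
  assumes M: "matroid M"
  shows "\<exists>B. base M B"
proof -
  obtain J where "base (restrict M (ground M)) J"
    using basis_exists[OF M] by blast
  then have "base M J"
    using indep_subset_ground[OF M] unfolding base_restrict_iff by (auto simp: base_iff)
  then show ?thesis ..
qed

lemma indep_extend_to_base:
  assumes M: "matroid M" and I: "indep M I"
  shows "\<exists>B. base M B \<and> I \<subseteq> B"
proof -
  obtain B0 where "base M B0"
    using base_exists[OF M] ..
  then show ?thesis
    using indep_extend_to_base_within[OF M I indep_subset_ground[OF M I] order_refl]
      base_subset_ground[OF M] by blast
qed

lemma base_subset_insert_diff:
  assumes M: "matroid M" and K: "base M K" and B: "base M B" "K \<subseteq> insert e B"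
    and f: "f \<in> B - K"
  shows "B - {f} \<subseteq> K"
proof
  fix g assume g: "g \<in> B - {f}"
  show "g \<in> K"
  proof (rule ccontr)
    assume "g \<notin> K"
    have "indep M (B - {g})" "\<not> base M (B - {g})"
      using indep_subset[OF M] B(1) g by (auto simp: base_iff)
    then obtain x where x: "x \<in> K - (B - {g})" "indep M (insert x (B - {g}))"
      using base_augment[OF M _ _ K] by blast
    with B(2) \<open>g \<notin> K\<close> have "x = e"
      by blast
    with B(2) \<open>g \<notin> K\<close> f g have "insert f K \<subseteq> insert x (B - {g})"
      by blast
    then have "indep M (insert f K)"
      by (rule indep_subset[OF M x(2)])
    then show False
      using K f by (auto simp: base_iff)
  qed
qed

lemma base_swap:
  assumes M: "matroid M" and B: "base M B" and b: "b \<in> B" and g: "g \<notin> B"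
    and i: "indep M (insert g (B - {b}))"
  shows "base M (insert g (B - {b}))"
proof (rule ccontr)
  assume "\<not> base M (insert g (B - {b}))"
  then obtain x where x: "x \<in> B - insert g (B - {b})" "indep M (insert x (insert g (B - {b})))"
    using base_augment[OF M i _ B] by blast
  then have "insert g B \<subseteq> insert x (insert g (B - {b}))"
    by blast
  then have "indep M (insert g B)"
    by (rule indep_subset[OF M x(2)])
  then show False
    using B g by (auto simp: base_iff)
qed

lemma base_extending_basis_covers_dual_basis_compl:
  assumes M: "matroid M" and BX: "base (restrict M X) BX"
    and D: "base (restrict (dual M) (ground M - X)) D"
  shows "\<exists>B. base M B \<and> BX \<subseteq> B \<and> (ground M - X) - D \<subseteq> B"
proof -
  have BX_indep: "indep M BX" "BX \<subseteq> X"
    using BX by (simp_all add: base_restrict_iff)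
  from D have D_sub: "D \<subseteq> ground M - X"
    and D_max: "\<forall>K. indep (dual M) K \<and> D \<subseteq> K \<and> K \<subseteq> ground M - X \<longrightarrow> K = D"
    by (auto simp: base_restrict_iff)
  from D obtain B0 where B0: "base M B0" "D \<inter> B0 = {}"
    by (auto simp: base_restrict_iff indep_dual)
  obtain B where B: "base M B" "BX \<subseteq> B" "B \<subseteq> ground M - D"
    using indep_extend_to_base_within[OF M BX_indep(1), of "ground M - D"]
      indep_subset_ground[OF M BX_indep(1)] BX_indep(2) D_sub B0 base_subset_ground[OF M] by blast
  have "e \<in> B" if e: "e \<in> (ground M - X) - D" for e
  proof (rule ccontr)
    assume "e \<notin> B"
    then have "indep (dual M) (insert e D)"
      using B e D_sub by (auto simp: indep_dual)
    then show False
      using D_max e D_sub by blast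
  qed
  then show ?thesis
    using B by blast
qed

lemma dual_basis_compl_of_base:
  assumes M: "matroid M" and BX: "base (restrict M X) BX" and B: "base M B" "BX \<subseteq> B"
  shows "base (restrict (dual M) (ground M - X)) ((ground M - X) - B)"
  unfolding base_restrict_iff
proof (intro conjI allI impI)
  have BX_sub: "BX \<subseteq> X" and BX_max: "\<forall>K. indep M K \<and> BX \<subseteq> K \<and> K \<subseteq> X \<longrightarrow> K = BX"
    using BX by (simp_all add: base_restrict_iff)
  show "indep (dual M) ((ground M - X) - B)"
    using B unfolding indep_dual by blast
  show "(ground M - X) - B \<subseteq> ground M - X"
    by blast
  fix K assume K: "indep (dual M) K \<and> (ground M - X) - B \<subseteq> K \<and> K \<subseteq> ground M - X"
  then obtain B' where B': "base M B'" "K \<inter> B' = {}"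
    by (auto simp: indep_dual)
  show "K = (ground M - X) - B"
  proof (rule ccontr)
    assume "K \<noteq> (ground M - X) - B"
    then obtain e where e: "e \<in> K" "e \<in> B"
      using K by blast
    have "indep M (B - {e})" "\<not> base M (B - {e})"
      using indep_subset[OF M] B(1) e(2) by (auto simp: base_iff)
    then obtain x where x: "x \<in> B' - (B - {e})" "indep M (insert x (B - {e}))"
      using base_augment[OF M _ _ B'(1)] by blast
    have "x \<noteq> e" "x \<notin> K" "x \<in> ground M"
      using x(1) B' e(1) base_subset_ground[OF M B'(1)] by blast+
    then have x_X: "x \<in> X" "x \<notin> B"
      using K x(1) by auto
    have "insert x BX \<subseteq> insert x (B - {e})"
      using B(2) e K BX_sub by blast
    then have "indep M (insert x BX)"
      by (rule indep_subset[OF M x(2)])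
    then have "insert x BX = BX"
      using BX_max BX_sub x_X(1) by blast
    then show False
      using x_X B(2) by blast
  qed
qed

lemma indep_contract_iff:
  assumes M: "matroid M" and BX: "base (restrict M X) BX"
  shows "indep (contract M X) J \<longleftrightarrow> J \<subseteq> ground M - X \<and> indep M (J \<union> BX)"
proof
  assume "indep (contract M X) J"
  then obtain D where J: "J \<subseteq> ground M - X" and D: "base (restrict (dual M) (ground M - X)) D"
    and JD: "J \<inter> D = {}"
    by (auto simp: indep_contract)
  obtain B where "base M B" "BX \<subseteq> B" "(ground M - X) - D \<subseteq> B"
    using base_extending_basis_covers_dual_basis_compl[OF M BX D] by blast
  moreover have "J \<union> BX \<subseteq> B"
    using calculation J JD by blast
  ultimately show "J \<subseteq> ground M - X \<and> indep M (J \<union> BX)"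
    using J indep_subset[OF M] by (auto simp: base_iff)
next
  assume J: "J \<subseteq> ground M - X \<and> indep M (J \<union> BX)"
  then obtain B where B: "base M B" "J \<union> BX \<subseteq> B"
    using indep_extend_to_base[OF M] by blast
  then have "base (restrict (dual M) (ground M - X)) ((ground M - X) - B)"
    using dual_basis_compl_of_base[OF M BX] by blast
  moreover have "J \<inter> ((ground M - X) - B) = {}"
    using B by blast
  ultimately show "indep (contract M X) J"
    using J unfolding indep_contract by blast
qed

lemma indep_contract_indep_iff:
  "matroid M \<Longrightarrow> indep M X \<Longrightarrow> indep (contract M X) J \<longleftrightarrow> J \<subseteq> ground M - X \<and> indep M (J \<union> X)"
  using indep_contract_iff base_restrict_self by blast

lemma indep_Un_of_indep_contract:
  "matroid M \<Longrightarrow> indep M I \<Longrightarrow> indep (contract M I) B \<Longrightarrow> indep M (I \<union> B)"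
  by (simp add: indep_contract_indep_iff Un_commute)

lemma indep_contract_to_iff:
  assumes "matroid M" "W \<subseteq> ground M" "base (restrict M (ground M - W)) C"
  shows "indep (contract_to M W) J \<longleftrightarrow> J \<subseteq> W \<and> indep M (J \<union> C)"
proof -
  have "ground M - (ground M - W) = W"
    using assms(2) by blast
  then show ?thesis
    unfolding contract_to_def using indep_contract_iff[OF assms(1,3)] by simp
qed

lemma indep_of_indep_contract_to:
  assumes N: "matroid N" and W: "W \<subseteq> ground N" and B: "indep (contract_to N W) B"
  shows "indep N B" "B \<subseteq> W"
proof -
  obtain C where C: "base (restrict N (ground N - W)) C"
    using basis_exists[OF N, of "ground N - W"] by blast
  then have "indep N (B \<union> C)" "B \<subseteq> W"
    using B by (simp_all add: indep_contract_to_iff[OF N W C])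
  then show "indep N B" "B \<subseteq> W"
    using indep_subset[OF N] by blast+
qed

lemma base_contract_iff:
  assumes M: "matroid M" and BX: "base (restrict M X) BX"
  shows "base (contract M X) J \<longleftrightarrow> J \<subseteq> ground M - X \<and> base M (J \<union> BX)"
proof -
  note indep_iff = indep_contract_iff[OF M BX]
  have BX_sub: "BX \<subseteq> X"
    and BX_max: "\<forall>K. indep M K \<and> BX \<subseteq> K \<and> K \<subseteq> X \<longrightarrow> K = BX"
    using BX by (auto simp: base_restrict_iff)
  show ?thesis
  proof
    assume b: "base (contract M X) J"
    then have J: "J \<subseteq> ground M - X" "indep M (J \<union> BX)"
      by (simp_all add: indep_iff base_iff)
    have "K = J \<union> BX" if K: "indep M K" "J \<union> BX \<subseteq> K" for K
    proof -
      have "indep M (K \<inter> X)"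
        using indep_subset[OF M K(1)] by blast
      then have KX: "K \<inter> X = BX"
        using BX_max BX_sub K(2) by blast
      then have "(K - X) \<union> BX = K"
        by blast
      then have "indep (contract M X) (K - X)"
        using indep_subset_ground[OF M K(1)] K(1) by (simp add: indep_iff) blast
      then have "K - X = J"
        using b K(2) J(1) unfolding base_iff by blast
      then show ?thesis
        using KX by blast
    qed
    then show "J \<subseteq> ground M - X \<and> base M (J \<union> BX)"
      using J unfolding base_iff by blast
  next
    assume J: "J \<subseteq> ground M - X \<and> base M (J \<union> BX)"
    have "indep (contract M X) J"
      using J by (simp add: indep_iff base_iff)
    moreover have "K = J" if "indep (contract M X) K" "J \<subseteq> K" for K
    proof -
      have "K \<subseteq> ground M - X" "indep M (K \<union> BX)"
        using that(1) by (simp_all add: indep_iff)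
      moreover have "J \<union> BX \<subseteq> K \<union> BX"
        using that(2) by blast
      ultimately show ?thesis
        using J BX_sub unfolding base_iff by blast
    qed
    ultimately show "base (contract M X) J"
      unfolding base_iff by blast
  qed
qed

lemma base_Un_of_base_contract_to:
  assumes "matroid N" "base (contract_to N W) B" "base (restrict N (ground N - W)) C"
  shows "base N (B \<union> C)"
  using assms unfolding contract_to_def base_contract_iff[OF assms(1,3)] by blast

lemma contract_maximal_exists:
  assumes M: "matroid M" and BX: "base (restrict M X) BX"
    and I: "indep (contract M X) I" "I \<subseteq> Y" and Y: "Y \<subseteq> ground M - X"
  shows "\<exists>J. maxl (\<lambda>J. indep (contract M X) J \<and> I \<subseteq> J \<and> J \<subseteq> Y) J"
proof -
  note indep_iff = indep_contract_iff[OF M BX]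
  have BX_indep: "indep M BX" "BX \<subseteq> X"
    using BX by (simp_all add: base_restrict_iff)
  have "indep M (I \<union> BX)" "Y \<union> BX \<subseteq> ground M"
    using I(1) Y indep_subset_ground[OF M BX_indep(1)] by (auto simp: indep_iff)
  then obtain K where K: "base (restrict M (Y \<union> BX)) K" "I \<union> BX \<subseteq> K"
    using basis_extend[OF M, of "I \<union> BX" "Y \<union> BX"] I(2) by blast
  then have K_indep: "indep M K" "K \<subseteq> Y \<union> BX"
    and K_max: "\<forall>K'. indep M K' \<and> K \<subseteq> K' \<and> K' \<subseteq> Y \<union> BX \<longrightarrow> K' = K"
    by (simp_all add: base_restrict_iff)
  have "(K - BX) \<union> BX = K" "K - BX \<subseteq> ground M - X"
    using K(2) K_indep(2) Y by blast+
  then have "indep (contract M X) (K - BX)"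
    using K_indep(1) by (simp add: indep_iff)
  moreover have "I \<subseteq> K - BX" "K - BX \<subseteq> Y"
    using K(2) K_indep(2) I(2) Y BX_indep(2) by blast+
  moreover have "K' = K - BX"
    if "indep (contract M X) K'" "K' \<subseteq> Y" "K - BX \<subseteq> K'" for K'
  proof -
    have "indep M (K' \<union> BX)"
      using that(1) by (simp add: indep_iff)
    moreover have "K \<subseteq> K' \<union> BX" "K' \<union> BX \<subseteq> Y \<union> BX"
      using that(2,3) by blast+
    ultimately have "K' \<union> BX = K"
      using K_max by blast
    then show ?thesis
      using that(2) Y BX_indep(2) by blast
  qed
  ultimately show ?thesis
    unfolding maxl_def by blast
qed

lemma matroid_contract:
  assumes M: "matroid M" and X: "X \<subseteq> ground M"
  shows "matroid (contract M X)"
proof -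
  obtain BX where BX: "base (restrict M X) BX"
    using basis_exists[OF M X] ..
  note indep_iff = indep_contract_iff[OF M BX] and base_iff' = base_contract_iff[OF M BX]
  have BX_indep: "indep M BX"
    using BX by (simp add: base_restrict_iff)
  show ?thesis
    unfolding matroid_def
  proof (intro conjI allI impI)
    fix J assume "indep (contract M X) J"
    then show "J \<subseteq> ground (contract M X)"
      by (simp add: indep_iff)
  next
    show "indep (contract M X) {}"
      using BX_indep by (simp add: indep_iff)
  next
    fix I J assume a: "indep (contract M X) I \<and> J \<subseteq> I"
    then have "indep M (I \<union> BX)" "I \<subseteq> ground M - X"
      by (simp_all add: indep_iff)
    moreover have "J \<union> BX \<subseteq> I \<union> BX"
      using a by blast
    ultimately show "indep (contract M X) J"
      using a indep_subset[OF M, of "I \<union> BX" "J \<union> BX"] by (simp add: indep_iff)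
  next
    fix I I' assume a: "indep (contract M X) I \<and> \<not> base (contract M X) I \<and> base (contract M X) I'"
    then have I: "indep M (I \<union> BX)" "I \<subseteq> ground M - X"
      by (simp_all add: indep_iff)
    have "\<not> base M (I \<union> BX)" "base M (I' \<union> BX)" "I' \<subseteq> ground M - X"
      using a I(2) by (simp_all add: base_iff')
    then obtain x where x: "x \<in> (I' \<union> BX) - (I \<union> BX)" "indep M (insert x (I \<union> BX))"
      using base_augment[OF M I(1)] by blast
    have "x \<in> I' - I" "insert x I \<subseteq> ground M - X"
      using x(1) \<open>I' \<subseteq> ground M - X\<close> I(2) by blast+
    then show "\<exists>x\<in>I' - I. indep (contract M X) (insert x I)"
      using x(2) by (auto simp: indep_iff)
  next
    fix I Y assume "indep (contract M X) I \<and> I \<subseteq> Y \<and> Y \<subseteq> ground (contract M X)"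
    then show "\<exists>J. maxl (\<lambda>J. indep (contract M X) J \<and> I \<subseteq> J \<and> J \<subseteq> Y) J"
      using contract_maximal_exists[OF M BX] by simp
  qed
qed

lemma contract_contract:
  assumes M: "matroid M" and I: "indep M I" and B: "indep (contract M I) B"
  shows "contract (contract M I) B = contract M (I \<union> B)"
proof (rule matroid_eqI)
  show "ground (contract (contract M I) B) = ground (contract M (I \<union> B))"
    by auto
next
  fix J
  have B_ground: "B \<subseteq> ground M - I" and IB: "indep M (I \<union> B)"
    using B by (simp_all add: indep_contract_indep_iff[OF M I] Un_commute)
  have "matroid (contract M I)"
    using matroid_contract[OF M indep_subset_ground[OF M I]] .
  then have "indep (contract (contract M I) B) J \<longleftrightarrow>
      J \<subseteq> ground M - I - B \<and> J \<union> B \<subseteq> ground M - I \<and> indep M (J \<union> B \<union> I)"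
    using indep_contract_indep_iff[OF _ B] indep_contract_indep_iff[OF M I] by simp
  also have "\<dots> \<longleftrightarrow> indep (contract M (I \<union> B)) J"
    using indep_contract_indep_iff[OF M IB] B_ground by (auto simp: Un_ac)
  finally show "indep (contract (contract M I) B) J = indep (contract M (I \<union> B)) J" .
qed

lemma fundamental_set_dependent:
  assumes M: "matroid M" and J: "indep M J" and e: "e \<in> ground M"
    and dep: "\<not> indep M (insert e J)"
  shows "\<not> indep M (insert e {f \<in> J. indep M (insert e (J - {f}))})" (is "\<not> indep M ?C")
proof
  assume C_indep: "indep M ?C"
  obtain BJ where BJ: "base M BJ" "J \<subseteq> BJ"
    using indep_extend_to_base[OF M J] by blast
  have "?C \<subseteq> insert e BJ" "insert e BJ \<subseteq> ground M"
    using BJ base_subset_ground[OF M BJ(1)] e by blast+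
  then obtain K where K: "base (restrict M (insert e BJ)) K" "?C \<subseteq> K"
    using basis_extend[OF M C_indep] by blast
  then have K_indep: "indep M K" "K \<subseteq> insert e BJ"
    by (simp_all add: base_restrict_iff)
  have K_base: "base M K"
    using base_of_basis_containing_base[OF M K(1) BJ(1)] by blast
  have "\<not> BJ \<subseteq> K"
  proof
    assume "BJ \<subseteq> K"
    then have "insert e J \<subseteq> K"
      using K(2) BJ(2) by blast
    then show False
      using dep indep_subset[OF M K_indep(1)] by blast
  qed
  then obtain f where f: "f \<in> BJ - K"
    by blast
  then have "insert e (J - {f}) \<subseteq> K"
    using base_subset_insert_diff[OF M K_base BJ(1) K_indep(2)] K(2) BJ(2) by blast
  then have "indep M (insert e (J - {f}))"
    by (rule indep_subset[OF M K_indep(1)])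
  moreover have "f \<in> J"
    using calculation dep by (cases "f \<in> J") auto
  ultimately show False
    using f K(2) by blast
qed

lemma fundamental_circuit:
  assumes M: "matroid M" and J: "indep M J" and e: "e \<in> ground M" "e \<notin> J"
    and dep: "\<not> indep M (insert e J)"
  shows "\<exists>C. circuit M C \<and> e \<in> C \<and> C \<subseteq> insert e J"
proof -
  define C where "C = insert e {f \<in> J. indep M (insert e (J - {f}))}"
  have "indep M D" if D: "D \<subset> C" for D
  proof -
    obtain g where g: "g \<in> C" "g \<notin> D"
      using D by blast
    show ?thesis
    proof (cases "g = e")
      case True
      then have "D \<subseteq> J"
        using D g C_def by blast
      then show ?thesis
        using indep_subset[OF M J] by blast
    next
      case False
      then have "indep M (insert e (J - {g}))" "D \<subseteq> insert e (J - {g})"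
        using D g C_def by auto
      then show ?thesis
        using indep_subset[OF M] by blast
    qed
  qed
  moreover have "\<not> indep M C"
    unfolding C_def using fundamental_set_dependent[OF M J e(1) dep] .
  moreover have "C \<subseteq> ground M"
    using e(1) indep_subset_ground[OF M J] C_def by blast
  ultimately show ?thesis
    unfolding circuit_def C_def by blast
qed

lemma span_mono: "F \<subseteq> G \<Longrightarrow> span M F \<subseteq> span M G"
  unfolding span_def by blast

lemma span_diff_mono_indep:
  assumes M: "matroid M" and XY: "indep M (X \<union> Y)"
  shows "span M X - X \<subseteq> span M (X \<union> Y) - (X \<union> Y)"
proof
  fix y assume y: "y \<in> span M X - X"
  then obtain C where C: "circuit M C" "C \<subseteq> insert y X"
    unfolding span_def by blast
  have "y \<notin> Y"
  proof
    assume "y \<in> Y"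
    then have "indep M C"
      using indep_subset[OF M XY] C(2) by blast
    then show False
      using C(1) unfolding circuit_def by blast
  qed
  then show "y \<in> span M (X \<union> Y) - (X \<union> Y)"
    using y span_mono[of X "X \<union> Y" M] by blast
qed

lemma loop_contract_in_span:
  assumes M: "matroid M" and X: "indep M X" and e: "loop (contract M X) e"
  shows "e \<in> span M X - X"
proof -
  have e_ground: "e \<in> ground M - X" and "\<not> indep M (insert e X)"
    using e by (auto simp: loop_def circuit_def indep_contract_indep_iff[OF M X])
  then obtain C where "circuit M C" "e \<in> C" "C \<subseteq> insert e X"
    using fundamental_circuit[OF M X] by blast
  then show ?thesis
    using e_ground unfolding span_def by blast
qed

lemma fundamental_cocircuit:
  assumes N: "matroid N" and B: "base N B" and b: "b \<in> B"
  shows "circuit (dual N) (insert b {f \<in> ground N - B. indep N (insert f (B - {b}))})"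
    (is "circuit _ ?C")
  unfolding circuit_def ground_dual
proof (intro conjI allI impI)
  show C_ground: "?C \<subseteq> ground N"
    using base_subset_ground[OF N B] b by blast
  show "\<not> indep (dual N) ?C"
  proof
    assume "indep (dual N) ?C"
    then obtain D where D: "base N D" "?C \<inter> D = {}"
      unfolding indep_dual by blast
    have "indep N (B - {b})" "\<not> base N (B - {b})"
      using indep_subset[OF N] B b by (auto simp: base_iff)
    then obtain y where y: "y \<in> D - (B - {b})" "indep N (insert y (B - {b}))"
      using base_augment[OF N _ _ D(1)] by blast
    have "y \<noteq> b" "y \<in> ground N"
      using y D b base_subset_ground[OF N D(1)] by blast+
    then have "y \<in> ?C"
      using y by blast
    then show False
      using y D by blast
  qed
  fix D assume D: "D \<subset> ?C"
  then obtain g where g: "g \<in> ?C" "g \<notin> D"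
    by blast
  have D_ground: "D \<subseteq> ground N"
    using D C_ground by blast
  show "indep (dual N) D"
  proof (cases "g = b")
    case True
    then have "D \<inter> B = {}"
      using D g by blast
    then show ?thesis
      unfolding indep_dual using D_ground B by blast
  next
    case False
    then have "base N (insert g (B - {b}))"
      using g base_swap[OF N B b] by blast
    moreover have "D \<inter> insert g (B - {b}) = {}"
      using D g by blast
    ultimately show ?thesis
      unfolding indep_dual using D_ground by blast
  qed
qed

lemma base_elem_in_span_dual:
  assumes N: "matroid N" and B: "base N B" and b: "b \<in> B"
    and S: "\<And>f. f \<in> ground N - B \<Longrightarrow> indep N (insert f (B - {b})) \<Longrightarrow> f \<in> S"
  shows "b \<in> span (dual N) S"
proof -
  have "insert b {f \<in> ground N - B. indep N (insert f (B - {b}))} \<subseteq> insert b S"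
    using S by blast
  moreover have "b \<in> ground N"
    using base_subset_ground[OF N B] b by blast
  ultimately show ?thesis
    using fundamental_cocircuit[OF N B b] unfolding span_def ground_dual by blast
qed

lemma waveU_subset_ground: "waveU M N \<subseteq> ground M"
  unfolding waveU_def wave_def by blast

lemma common_bases_indep:
  assumes "matroid N" "X \<subseteq> ground N" "B \<in> common_bases M N X"
  shows "indep M B" "indep N B"
  using assms indep_of_indep_contract_to(1)[OF assms(1,2)]
  by (auto simp: common_bases_def base_iff indep_restrict)

lemma base_restrict_Un_contract:
  assumes M: "matroid M" and B: "base (restrict M W) B"
    and B': "base (restrict (contract M B) W') B'"
  shows "base (restrict M (W \<union> W')) (B \<union> B')"
proof -
  have B_indep: "indep M B" "B \<subseteq> W" and B_max: "\<forall>K. indep M K \<and> B \<subseteq> K \<and> K \<subseteq> W \<longrightarrow> K = B"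
    using B by (simp_all add: base_restrict_iff)
  have B'_indep: "indep (contract M B) B'" "B' \<subseteq> W'"
    and B'_max: "\<forall>K. indep (contract M B) K \<and> B' \<subseteq> K \<and> K \<subseteq> W' \<longrightarrow> K = B'"
    using B' by (simp_all add: base_restrict_iff)
  note indep_MB = indep_contract_indep_iff[OF M B_indep(1)]
  have "indep M (B \<union> B')"
    using B'_indep(1) by (simp add: indep_MB Un_commute)
  moreover have "K \<subseteq> B \<union> B'" if K: "indep M K" "B \<union> B' \<subseteq> K" "K \<subseteq> W \<union> W'" for K
  proof
    fix x assume x: "x \<in> K"
    show "x \<in> B \<union> B'"
    proof (cases "x \<in> W")
      case True
      have "indep M (insert x B)"
        using indep_subset[OF M K(1)] x K(2) by blast
      then show ?thesis
        using B_max B_indep(2) True by blast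
    next
      case False
      have "insert x B' \<union> B \<subseteq> K"
        using x K(2) by blast
      then have "indep M (insert x B' \<union> B)"
        by (rule indep_subset[OF M K(1)])
      moreover have "insert x B' \<subseteq> ground M - B"
        using False x K(3) B'_indep indep_subset_ground[OF M K(1)] B_indep(2) by (auto simp: indep_MB)
      ultimately have "indep (contract M B) (insert x B')"
        by (simp add: indep_MB)
      then show ?thesis
        using B'_max B'_indep(2) False x K(3) by blast
    qed
  qed
  moreover have "B \<union> B' \<subseteq> W \<union> W'"
    using B_indep(2) B'_indep(2) by blast
  ultimately show ?thesis
    unfolding base_restrict_iff by blast
qed

lemma indep_contract_to_Un_contract:
  assumes N: "matroid N" and W: "W \<subseteq> ground N" and W': "W' \<subseteq> ground N - B"
    and B: "indep (contract_to N W) B" and B': "indep (contract_to (contract N B) W') B'"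
  shows "indep (contract_to N (W \<union> W')) (B \<union> B')"
proof -
  txt \<open>Nest the bases of the complements, \<open>C \<subseteq> C1\<close> in \<open>N\<close> and \<open>C \<subseteq> C2\<close> in \<open>N/B\<close>, so that the
    independence of \<open>B \<union> C1\<close> and of \<open>B' \<union> C2 \<union> B\<close> both pass down to \<open>C\<close>.\<close>
  obtain C where C: "base (restrict N (ground N - (W \<union> W'))) C"
    using basis_exists[OF N, of "ground N - (W \<union> W')"] by blast
  have C_indep: "indep N C" "C \<subseteq> ground N - (W \<union> W')"
    using C by (simp_all add: base_restrict_iff)
  obtain C1 where C1: "base (restrict N (ground N - W)) C1" "C \<subseteq> C1"
    using basis_extend[OF N C_indep(1), of "ground N - W"] C_indep(2) by blast
  have "B \<subseteq> W" "indep N (B \<union> C1)"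
    using B by (simp_all add: indep_contract_to_iff[OF N W C1(1)])
  then have B_indep: "indep N B" and "indep N (C \<union> B)"
    using indep_subset[OF N] C1(2) by blast+
  note indep_NB = indep_contract_indep_iff[OF N B_indep]
  have NB: "matroid (contract N B)"
    using matroid_contract[OF N indep_subset_ground[OF N B_indep]] .
  have "indep (contract N B) C"
    using \<open>indep N (C \<union> B)\<close> C_indep(2) \<open>B \<subseteq> W\<close> by (auto simp: indep_NB)
  then obtain C2 where C2: "base (restrict (contract N B) (ground N - B - W')) C2" "C \<subseteq> C2"
    using basis_extend[OF NB, of C "ground N - B - W'"] C_indep(2) \<open>B \<subseteq> W\<close> by auto
  have "B' \<subseteq> W'" "indep (contract N B) (B' \<union> C2)"
    using B' W' C2(1) by (simp_all add: indep_contract_to_iff[OF NB] Diff_Diff_Int)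
  then have "indep N (B' \<union> C2 \<union> B)"
    by (simp add: indep_NB)
  then have "indep N ((B \<union> B') \<union> C)"
    by (rule indep_subset[OF N]) (use C2(2) in blast)
  moreover have WW': "W \<union> W' \<subseteq> ground N"
    using W W' by blast
  ultimately show ?thesis
    using \<open>B \<subseteq> W\<close> \<open>B' \<subseteq> W'\<close> by (auto simp: indep_contract_to_iff[OF N WW' C])
qed

lemma wave_Un_contract:
  assumes M: "matroid M" and N: "matroid N" and ground: "ground M = ground N"
    and W: "W \<subseteq> ground M" and B: "base (restrict M W) B" "indep (contract_to N W) B"
    and W': "wave (contract M B) (contract N B) W'"
  shows "wave M N (W \<union> W')"
proof -
  obtain B' where B': "base (restrict (contract M B) W') B'"
    "indep (contract_to (contract N B) W') B'"
    using W' unfolding wave_def by blast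
  have W'_ground: "W' \<subseteq> ground N - B"
    using W' ground by (simp add: wave_def)
  have "base (restrict M (W \<union> W')) (B \<union> B')"
    using base_restrict_Un_contract[OF M B(1) B'(1)] .
  moreover have "indep (contract_to N (W \<union> W')) (B \<union> B')"
    using indep_contract_to_Un_contract[OF N _ W'_ground B(2) B'(2)] W ground by simp
  ultimately show ?thesis
    unfolding wave_def using W W'_ground ground by blast
qed

lemma waveU_contract_common_base:
  assumes M: "matroid M" and N: "matroid N" and ground: "ground M = ground N"
    and B: "B \<in> common_bases M N (waveU M N)"
  shows "waveU (contract M B) (contract N B) \<subseteq> waveU M N - B"
proof
  fix e assume "e \<in> waveU (contract M B) (contract N B)"
  then obtain W' where W': "wave (contract M B) (contract N B) W'" "e \<in> W'"
    unfolding waveU_def by blast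
  have "wave M N (waveU M N \<union> W')"
    using wave_Un_contract[OF M N ground waveU_subset_ground _ _ W'(1)] B
    by (simp add: common_bases_def base_iff)
  then have "W' \<subseteq> waveU M N"
    unfolding waveU_def by blast
  moreover have "W' \<subseteq> ground M - B"
    using W'(1) by (simp add: wave_def)
  ultimately show "e \<in> waveU M N - B"
    using W'(2) by blast
qed

lemma loop_contract_basis:
  assumes M: "matroid M" and B: "base (restrict M W) B" and e: "e \<in> W - B" "e \<in> ground M"
  shows "loop (contract M B) e"
proof -
  have B_indep: "indep M B" "B \<subseteq> W" and B_max: "\<forall>K. indep M K \<and> B \<subseteq> K \<and> K \<subseteq> W \<longrightarrow> K = B"
    using B by (simp_all add: base_restrict_iff)
  have "\<not> indep M (insert e B)"
    using B_max B_indep(2) e(1) by blast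
  then have "\<not> indep (contract M B) {e}"
    by (simp add: indep_contract_indep_iff[OF M B_indep(1)])
  moreover have "indep (contract M B) {}"
    using indep_empty[OF matroid_contract[OF M indep_subset_ground[OF M B_indep(1)]]] .
  ultimately show ?thesis
    unfolding loop_def circuit_def using e by (auto simp: subset_singleton_iff)
qed

lemma rank_zero_contract_to_iff:
  assumes K: "matroid K" and U: "U \<subseteq> ground K" and C: "base (restrict K (ground K - U)) C"
  shows "rank_zero (contract_to K U) \<longleftrightarrow> (\<forall>e\<in>U. \<not> indep K (insert e C))"
proof -
  note indep_U = indep_contract_to_iff[OF K U C]
  have "indep (contract_to K U) {}"
    using C by (simp add: indep_U base_restrict_iff)
  moreover have "J = {}"
    if no_indep: "\<forall>e\<in>U. \<not> indep K (insert e C)" and J: "indep (contract_to K U) J" for J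
  proof (rule ccontr)
    assume "J \<noteq> {}"
    then obtain e where e: "e \<in> J"
      by blast
    have "J \<subseteq> U" "indep K (J \<union> C)"
      using J by (simp_all add: indep_U)
    then have "indep K (insert e C)"
      using indep_subset[OF K, of "J \<union> C" "insert e C"] e by blast
    then show False
      using no_indep e \<open>J \<subseteq> U\<close> by blast
  qed
  moreover have "indep (contract_to K U) {e} \<longleftrightarrow> indep K (insert e C)" if "e \<in> U" for e
    using that by (simp add: indep_U)
  ultimately show ?thesis
    unfolding rank_zero_def base_iff by blast
qed

lemma rank_zero_contract_to_contract:
  assumes N: "matroid N" and W: "W \<subseteq> ground N" and B: "base (contract_to N W) B"
    and U: "U \<subseteq> W - B"
  shows "rank_zero (contract_to (contract N B) U)"
proof -
  obtain C0 where C0: "base (restrict N (ground N - W)) C0"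
    using basis_exists[OF N, of "ground N - W"] by blast
  note indep_W = indep_contract_to_iff[OF N W C0]
  have B_sub: "B \<subseteq> W" and BC0: "indep N (B \<union> C0)"
    and B_max: "\<forall>K. K \<subseteq> W \<and> indep N (K \<union> C0) \<and> B \<subseteq> K \<longrightarrow> K = B"
    using B unfolding base_iff indep_W by blast+
  have B_indep: "indep N B"
    using indep_subset[OF N BC0] by blast
  note indep_NB = indep_contract_indep_iff[OF N B_indep]
  have NB: "matroid (contract N B)"
    using matroid_contract[OF N indep_subset_ground[OF N B_indep]] .
  have C0_sub: "C0 \<subseteq> ground N - W"
    using C0 by (simp add: base_restrict_iff)
  then have "indep (contract N B) C0"
    using BC0 B_sub by (auto simp: indep_NB Un_commute)
  then obtain C2 where C2: "base (restrict (contract N B) (ground (contract N B) - U)) C2" "C0 \<subseteq> C2"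
    using basis_extend[OF NB, of C0 "ground N - B - U"] C0_sub U B_sub by auto
  have "\<not> indep (contract N B) (insert e C2)" if e: "e \<in> U" for e
  proof
    assume "indep (contract N B) (insert e C2)"
    then have "indep N (insert e C2 \<union> B)"
      by (simp add: indep_NB)
    then have "indep N (insert e B \<union> C0)"
      by (rule indep_subset[OF N]) (use C2(2) in blast)
    moreover have "insert e B \<subseteq> W"
      using e U B_sub by blast
    ultimately have "insert e B = B"
      using B_max by blast
    then show False
      using e U by blast
  qed
  moreover have "U \<subseteq> ground (contract N B)"
    using U W by auto
  ultimately show ?thesis
    using rank_zero_contract_to_iff[OF NB _ C2(1)] by blast
qed

lemma cond_plus_contract_common_base:
  assumes M: "matroid M" and N: "matroid N" and ground: "ground M = ground N"
    and B: "B \<in> common_bases M N (waveU M N)"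
  shows "cond (contract M B) (contract N B) \<and> cond_plus (contract M B) (contract N B)"
proof -
  let ?W = "waveU M N"
  have W_ground: "?W \<subseteq> ground M"
    by (rule waveU_subset_ground)
  have B_base: "base (restrict M ?W) B" "base (contract_to N ?W) B"
    using B by (simp_all add: common_bases_def)
  have "B \<subseteq> ground M"
    using B_base(1) W_ground unfolding base_restrict_iff by blast
  then have MB: "matroid (contract M B)"
    using matroid_contract[OF M] by blast
  have waves: "waveU (contract M B) (contract N B) \<subseteq> ?W - B"
    using waveU_contract_common_base[OF M N ground B] .
  have rank_zero: "rank_zero (contract_to (contract N B) U)" if "U \<subseteq> ?W - B" for U
    using rank_zero_contract_to_contract[OF N _ B_base(2) that] W_ground ground by simp
  have "cond (contract M B) (contract N B)"
    unfolding cond_def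
  proof (intro allI impI)
    fix W' assume "wave (contract M B) (contract N B) W'"
    then have "W' \<subseteq> ?W - B"
      using waves unfolding waveU_def by blast
    then show "\<exists>B'. base (contract_to (contract N B) W') B' \<and> indep (contract M B) B'"
      using rank_zero indep_empty[OF MB] unfolding rank_zero_def by blast
  qed
  moreover have "loop (contract M B) e" if "e \<in> waveU (contract M B) (contract N B)" for e
    using loop_contract_basis[OF M B_base(1)] waves that W_ground by blast
  ultimately show ?thesis
    unfolding cond_plus_def using rank_zero waves by blast
qed

lemma basis_contract_diff_subset_span:
  assumes M: "matroid M" and I: "indep M I" and W: "W \<subseteq> ground M - I"
    and B: "base (restrict (contract M I) W) B"
  shows "W - B \<subseteq> span M (I \<union> B) - (I \<union> B)"
proof
  fix e assume e: "e \<in> W - B"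
  have B_indep: "indep (contract M I) B"
    using B by (simp add: base_restrict_iff)
  have "loop (contract (contract M I) B) e"
    using loop_contract_basis[OF matroid_contract[OF M indep_subset_ground[OF M I]] B e] e W by auto
  then have "loop (contract M (I \<union> B)) e"
    by (simp add: contract_contract[OF M I B_indep])
  then show "e \<in> span M (I \<union> B) - (I \<union> B)"
    using loop_contract_in_span[OF M indep_Un_of_indep_contract[OF M I B_indep]] by blast
qed

text \<open>Each \<open>b \<in> B\<close> lies in \<open>span (dual N)\<close> via its fundamental cocircuit with respect to the base
  \<open>I \<union> B \<union> C0\<close> of \<open>N\<close>, where \<open>C0\<close> is a basis of the complement of the wave in \<open>N/I\<close>; that
  cocircuit lives in \<open>W - B\<close>, which consists of \<open>M/(I \<union> B)\<close>-loops.\<close>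
lemma common_base_subset_span_dual:
  assumes M: "matroid M" and N: "matroid N" and ground: "ground M = ground N"
    and I: "indep M I" "indep N I"
    and B: "B \<in> common_bases (contract M I) (contract N I) (waveU (contract M I) (contract N I))"
  shows "B \<subseteq> span (dual N) (span M (I \<union> B) - (I \<union> B))"
proof
  define W where "W = waveU (contract M I) (contract N I)"
  have W_ground: "W \<subseteq> ground N - I"
    using waveU_subset_ground[of "contract M I" "contract N I"] ground by (simp add: W_def)
  have B_base: "base (restrict (contract M I) W) B" "base (contract_to (contract N I) W) B"
    using B by (simp_all add: common_bases_def W_def)
  then have "B \<subseteq> W"
    by (simp add: base_restrict_iff)
  have W_span: "W - B \<subseteq> span M (I \<union> B) - (I \<union> B)"
    using basis_contract_diff_subset_span[OF M I(1) _ B_base(1)] W_ground ground by simp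
  obtain C0 where C0: "base (restrict (contract N I) (ground (contract N I) - W)) C0"
    using basis_exists[OF matroid_contract[OF N indep_subset_ground[OF N I(2)]]] by blast
  have C0_sub: "C0 \<subseteq> ground N - I - W"
    and C0_max: "\<forall>K. indep (contract N I) K \<and> C0 \<subseteq> K \<and> K \<subseteq> ground N - I - W \<longrightarrow> K = C0"
    using C0 by (simp_all add: base_restrict_iff)
  have Bg: "base N (B \<union> C0 \<union> I)"
    using base_Un_of_base_contract_to[OF matroid_contract[OF N indep_subset_ground[OF N I(2)]] B_base(2) C0]
      base_contract_iff[OF N base_restrict_self[OF I(2)]] by blast
  fix b assume b: "b \<in> B"
  show "b \<in> span (dual N) (span M (I \<union> B) - (I \<union> B))"
  proof (rule base_elem_in_span_dual[OF N Bg])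
    show "b \<in> B \<union> C0 \<union> I"
      using b by blast
    fix f assume f: "f \<in> ground N - (B \<union> C0 \<union> I)" "indep N (insert f (B \<union> C0 \<union> I - {b}))"
    have "f \<in> W"
    proof (rule ccontr)
      assume "f \<notin> W"
      have "indep N (insert f C0 \<union> I)"
        by (rule indep_subset[OF N f(2)]) (use b \<open>B \<subseteq> W\<close> W_ground C0_sub in blast)
      then have "indep (contract N I) (insert f C0)"
        using f(1) C0_sub by (auto simp: indep_contract_indep_iff[OF N I(2)])
      then have "insert f C0 = C0"
        using C0_max f(1) \<open>f \<notin> W\<close> C0_sub by blast
      then show False
        using f(1) by blast
    qed
    then show "f \<in> span M (I \<union> B) - (I \<union> B)"
      using W_span f(1) by blast
  qed
qed

lemma dually_safe_Un:
  assumes M: "matroid M" and IB: "indep M (I \<union> B)" and I: "dually_safe M N I"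
    and B: "B \<subseteq> span (dual N) (span M (I \<union> B) - (I \<union> B))"
  shows "dually_safe M N (I \<union> B)"
proof -
  have "span (dual N) (span M I - I) \<subseteq> span (dual N) (span M (I \<union> B) - (I \<union> B))"
    using span_mono[OF span_diff_mono_indep[OF M IB]] .
  then show ?thesis
    using I B unfolding dually_safe_def by blast
qed

theorem mainTheorem12:
  fixes M N :: "'a matroid" and E I B :: "'a set"
  assumes "countable E"
    and "matroid M" and "ground M = E" and "finitary M"
    and "matroid N" and "ground N = E" and "fin_cofin_sum N"
    and "indep M I" and "indep N I" and "dually_safe M N I"
    and "B \<in> common_bases (contract M I) (contract N I) (waveU (contract M I) (contract N I))"
  shows "nice_feasible M N (I \<union> B) \<and> dually_safe M N (I \<union> B)"
proof -
  note M = assms(2) and N = assms(5) and I = assms(8,9) and B = assms(11)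
  have ground: "ground M = ground N"
    using assms(3,6) by simp
  have MI: "matroid (contract M I)" and NI: "matroid (contract N I)"
    using matroid_contract[OF M indep_subset_ground[OF M I(1)]]
      matroid_contract[OF N indep_subset_ground[OF N I(2)]] .
  have BM: "indep (contract M I) B" and BN: "indep (contract N I) B"
    using common_bases_indep[OF NI _ B] waveU_subset_ground[of "contract M I"] ground by auto
  have IB: "indep M (I \<union> B)" "indep N (I \<union> B)"
    using indep_Un_of_indep_contract M N I BM BN by blast+
  have "cond (contract M (I \<union> B)) (contract N (I \<union> B)) \<and>
      cond_plus (contract M (I \<union> B)) (contract N (I \<union> B))"
    using cond_plus_contract_common_base[OF MI NI _ B] ground
    by (simp add: contract_contract[OF M I(1) BM] contract_contract[OF N I(2) BN])
  then have "nice_feasible M N (I \<union> B)"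
    unfolding nice_feasible_def feasible_def using IB by blast
  moreover have "dually_safe M N (I \<union> B)"
    using dually_safe_Un[OF M IB(1) assms(10) common_base_subset_span_dual[OF M N ground I B]] .
  ultimately show ?thesis ..
qed

end
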